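(* Let $e=(B,T)$ be an edge with disjoint nonempty $T,B\subseteq[d]$, $m=|T|$, $r=|T|+|B|$, and let $\theta\in\mathbb{R}^d$ satisfy $|\theta_i|\le b$ for all $i$. Then $$\sum_{i\in T\cup B}\Big(\frac{\partial\log\mathbb{P}_\theta(e)}{\partial\theta_i}\Big)^2\ \le\ 2\,m\,e^{2b}\Big(\frac{r}{r-m}\Big)^2,$$ and $\partial\log\mathbb{P}_\theta(e)/\partial\theta_i=0$ for $i\notin T\cup B$.
   Context: PL model: items $[d]$, parameter $\theta\in\mathbb{R}^d$. For disjoint nonempty $T,B\subseteq[d]$, $\mathbb{P}_\theta(e)=\mathbb{P}_\theta(B\prec T)=\sum_{\sigma}\prod_{u=1}^{|T|}\frac{e^{\theta_{\sigma(u)}}}{\sum_{c=u}^{|T|}e^{\theta_{\sigma(c)}}+\sum_{i\in B}e^{\theta_i}}$, the sum over all orderings $\sigma=(\sigma(1),\dots,\sigma(|T|))$ of $T$; this is the PL probability that all items of $T$ are ranked above all items of $B$ when $T\cup B$ is offered. *)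

theory Defs
  imports "HOL-Analysis.Analysis" "HOL-Combinatorics.Multiset_Permutations"
begin

text \<open>Plackett--Luce probability that all items of T are ranked above all items of B
  when T \<union> B is offered. Items are natural numbers (the paper's [d] is {..<d});
  an ordering of T is a distinct list enumerating T; position u (0-indexed).\<close>
definition PL_prob :: "(nat \<Rightarrow> real) \<Rightarrow> nat set \<Rightarrow> nat set \<Rightarrow> real" where
  "PL_prob \<theta> T B =
     (\<Sum>\<sigma>\<in>permutations_of_set T.
        \<Prod>u<card T. exp (\<theta> (\<sigma> ! u)) /
           ((\<Sum>c=u..<card T. exp (\<theta> (\<sigma> ! c))) + (\<Sum>i\<in>B. exp (\<theta> i))))"

end

theory Submission
  imports Defs
begin

text \<open>Write the event probability as a sum over rankings \<sigma> of T of exp (\<ell> \<sigma>), where \<ell> \<sigma> is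
  the log-likelihood of \<sigma> followed by B. Then the partial derivative of log P in \<theta> i is
  [i \<in> T] - X i, where X i is the expectation, given the event, of the sum over the |T| stages of
  the Luce probability of choosing i among the items still on offer. B is on offer at every stage,
  so each such probability is at most exp (2b) / |B|, and at every stage they sum to 1 over T \<union> B.
  Hence 0 \<le> X i \<le> |T| exp (2b) / |B| and \<Sum> X = |T|, so
  \<Sum> ([i \<in> T] - X i)^2 \<le> |T| + max X \<cdot> \<Sum> X \<le> |T| + |T|^2 exp (2b) / |B|,
  which is below the stated bound.\<close>

lemma sum_nth_upt_eq_sum_set_drop:
  assumes "distinct xs"
  shows "(\<Sum>c=u..<length xs. f (xs ! c)) = sum f (set (drop u xs))"
proof -
  have "sum f (set (drop u xs)) = (\<Sum>k<length xs - u. f (xs ! (u + k)))"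
    using assms by (simp add: sum.distinct_set_conv_list sum_list_sum_nth atLeast0LessThan)
  also have "\<dots> = (\<Sum>c=u..<length xs. f (xs ! c))"
    by (rule sum.reindex_bij_witness[of _ "\<lambda>c. c - u" "\<lambda>k. u + k"]) auto
  finally show ?thesis by simp
qed

lemma sum_of_bool_nth_distinct:
  assumes "distinct xs"
  shows "(\<Sum>u<length xs. of_bool (xs ! u = i)) = (of_bool (i \<in> set xs) :: 'b :: semiring_1)"
  using sum_nth_upt_eq_sum_set_drop[OF assms, where u=0 and f="\<lambda>j. of_bool (j = i)"]
  by (simp add: atLeast0LessThan of_bool_def sum.delta')

lemma weighted_mean_le:
  fixes w v :: "'a \<Rightarrow> real"
  assumes "\<And>s. s \<in> S \<Longrightarrow> 0 \<le> w s" "\<And>s. s \<in> S \<Longrightarrow> v s \<le> c" "0 \<le> c"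
  shows "(\<Sum>s\<in>S. w s * v s) / (\<Sum>s\<in>S. w s) \<le> c"
proof -
  have "(\<Sum>s\<in>S. w s * v s) \<le> c * (\<Sum>s\<in>S. w s)"
    unfolding sum_distrib_left using assms(1,2) by (intro sum_mono) (metis mult.commute mult_left_mono)
  then show ?thesis
    using assms(3) sum_nonneg[of S w] assms(1)
    by (cases "(\<Sum>s\<in>S. w s) = 0") (simp_all add: divide_le_eq)
qed

lemma sum_square_of_bool_minus_le:
  fixes y :: "'a \<Rightarrow> real"
  assumes "finite I" "J \<subseteq> I" "\<And>i. i \<in> I \<Longrightarrow> 0 \<le> y i \<and> y i \<le> M"
  shows "(\<Sum>i\<in>I. (of_bool (i \<in> J) - y i)\<^sup>2) \<le> card J + M * sum y I"
proof -
  have "(of_bool (i \<in> J) - y i)\<^sup>2 \<le> of_bool (i \<in> J) + M * y i" if "i \<in> I" for i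
  proof -
    have "y i * y i \<le> M * y i"
      using assms(3)[OF that] by (simp add: mult_right_mono)
    then show ?thesis
      using assms(3)[OF that] by (cases "i \<in> J") (auto simp: power2_eq_square algebra_simps)
  qed
  then have "(\<Sum>i\<in>I. (of_bool (i \<in> J) - y i)\<^sup>2) \<le> (\<Sum>i\<in>I. of_bool (i \<in> J) + M * y i)"
    by (rule sum_mono)
  also have "\<dots> = card J + M * sum y I"
    using assms(1,2) by (simp add: sum.distrib sum_distrib_left Int_absorb1)
  finally show ?thesis .
qed

lemma PL_gradient_bound_arith:
  fixes m q a :: real
  assumes "0 \<le> m" "0 < q" "1 \<le> a"
  shows "m + m * (a / q) * m \<le> 2 * m * a * ((m + q) / (m + q - m))\<^sup>2"
proof -
  define t where "t = m / q"
  have t: "0 \<le> t" using assms by (simp add: t_def)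
  have "m + m * (a / q) * m = m + m * a * t" by (simp add: t_def)
  also have "\<dots> \<le> 2 * (m * a) + 4 * (m * a * t) + 2 * (m * a * t * t)"
  proof -
    have "m \<le> m * a" "0 \<le> m * a * t" "0 \<le> m * a * t * t"
      using assms t mult_left_mono[OF assms(3) assms(1)] by simp_all
    with assms(1) show ?thesis by linarith
  qed
  also have "\<dots> = 2 * (m * a) * (1 + t)\<^sup>2"
    by (simp add: power2_eq_square algebra_simps)
  also have "(1 + t) = (m + q) / (m + q - m)"
    using assms by (simp add: t_def field_simps)
  finally show ?thesis by (simp add: mult.assoc)
qed

lemma DERIV_fun_upd_apply:
  "((\<lambda>t. (\<theta>(i := t)) j) has_real_derivative of_bool (j = i)) (at (\<theta> i))"
  by (cases "j = i") auto

lemma DERIV_ln_sum_exp: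
  fixes f :: "'a \<Rightarrow> real \<Rightarrow> real"
  assumes "finite S" and "\<And>s. s \<in> S \<Longrightarrow> (f s has_real_derivative f' s) (at x)"
  shows "((\<lambda>t. ln (\<Sum>s\<in>S. exp (f s t))) has_real_derivative
           (\<Sum>s\<in>S. exp (f s x) * f' s) / (\<Sum>s\<in>S. exp (f s x))) (at x)"
proof (cases "S = {}")
  case False
  have "(\<Sum>s\<in>S. exp (f s x)) > 0"
    using assms(1) False by (intro sum_pos) auto
  moreover have "((\<lambda>t. \<Sum>s\<in>S. exp (f s t)) has_real_derivative (\<Sum>s\<in>S. exp (f s x) * f' s)) (at x)"
    using assms(2) by (intro DERIV_sum DERIV_chain2[OF DERIV_exp])
  ultimately show ?thesis
    by (auto dest: DERIV_chain2[OF DERIV_ln_divide] simp: field_simps)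
qed simp

definition luce_prob :: "('a \<Rightarrow> real) \<Rightarrow> 'a set \<Rightarrow> 'a \<Rightarrow> real" where
  "luce_prob \<theta> A i = of_bool (i \<in> A) * exp (\<theta> i) / (\<Sum>j\<in>A. exp (\<theta> j))"

lemma DERIV_ln_sum_exp_coordinate:
  assumes "finite A"
  shows "((\<lambda>t. ln (\<Sum>j\<in>A. exp ((\<theta>(i := t)) j))) has_real_derivative luce_prob \<theta> A i) (at (\<theta> i))"
proof -
  from DERIV_ln_sum_exp[where f="\<lambda>j t. (\<theta>(i := t)) j" and f'="\<lambda>j. of_bool (j = i)", OF assms DERIV_fun_upd_apply]
  have "((\<lambda>t. ln (\<Sum>j\<in>A. exp ((\<theta>(i := t)) j))) has_real_derivative
          (\<Sum>j\<in>A. exp (\<theta> j) * of_bool (j = i)) / (\<Sum>j\<in>A. exp (\<theta> j))) (at (\<theta> i))"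
    by (simp only: fun_upd_triv)
  moreover have "(\<Sum>j\<in>A. exp (\<theta> j) * of_bool (j = i)) = of_bool (i \<in> A) * exp (\<theta> i)"
    using assms by (simp add: of_bool_def if_distrib[of "\<lambda>x. _ * x"] sum.delta' cong: if_cong)
  ultimately show ?thesis
    by (simp add: luce_prob_def)
qed

lemma luce_prob_nonneg: "0 \<le> luce_prob \<theta> A i"
  unfolding luce_prob_def by (intro divide_nonneg_nonneg sum_nonneg) auto

lemma sum_luce_prob:
  assumes "finite C" "A \<subseteq> C" "A \<noteq> {}"
  shows "(\<Sum>i\<in>C. luce_prob \<theta> A i) = 1"
proof -
  have "finite A" using assms(1,2) finite_subset by blast
  then have pos: "(\<Sum>j\<in>A. exp (\<theta> j)) > 0" using assms(3) by (intro sum_pos) auto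
  have "(\<Sum>i\<in>C. of_bool (i \<in> A) * exp (\<theta> i)) = (\<Sum>i\<in>C. if i \<in> A then exp (\<theta> i) else 0)"
    by (intro sum.cong) auto
  also have "\<dots> = (\<Sum>i\<in>A. exp (\<theta> i))"
    using assms(1,2) by (simp add: sum.inter_restrict[symmetric] Int_absorb1)
  finally show ?thesis
    using pos unfolding luce_prob_def by (simp add: sum_divide_distrib[symmetric])
qed

lemma luce_prob_le:
  assumes "finite A" "B \<subseteq> A" "B \<noteq> {}" "\<And>j. j \<in> A \<Longrightarrow> \<bar>\<theta> j\<bar> \<le> b"
  shows "luce_prob \<theta> A i \<le> exp (2 * b) / card B"
proof (cases "i \<in> A")
  case True
  have "finite B" using assms(1,2) finite_subset by blast
  then have cB: "real (card B) > 0" using assms(3) by (simp add: card_gt_0_iff)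
  have "real (card B) * exp (- b) \<le> (\<Sum>j\<in>B. exp (\<theta> j))"
    using sum_bounded_below[where K="exp (- b)" and A=B and f="\<lambda>j. exp (\<theta> j)"] assms(2,4) by force
  also have "\<dots> \<le> (\<Sum>j\<in>A. exp (\<theta> j))"
    using assms(1,2) by (intro sum_mono2) auto
  finally have "exp (\<theta> i) / (\<Sum>j\<in>A. exp (\<theta> j)) \<le> exp b / (real (card B) * exp (- b))"
    using True assms(4)[of i] cB by (intro frac_le) auto
  then show ?thesis
    using True cB by (simp add: luce_prob_def exp_minus mult_exp_exp field_simps)
qed (simp add: luce_prob_def)

definition PL_loglik :: "('a \<Rightarrow> real) \<Rightarrow> 'a list \<Rightarrow> 'a set \<Rightarrow> real" where
  "PL_loglik \<theta> \<sigma> B = (\<Sum>u<length \<sigma>. \<theta> (\<sigma> ! u) - ln (\<Sum>j\<in>set (drop u \<sigma>) \<union> B. exp (\<theta> j)))"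

lemma PL_prob_eq_sum_exp_PL_loglik:
  assumes "finite B" "B \<noteq> {}" "T \<inter> B = {}"
  shows "PL_prob \<theta> T B = (\<Sum>\<sigma>\<in>permutations_of_set T. exp (PL_loglik \<theta> \<sigma> B))"
  unfolding PL_prob_def
proof (rule sum.cong[OF refl])
  fix \<sigma> assume "\<sigma> \<in> permutations_of_set T"
  then have \<sigma>: "distinct \<sigma>" "set \<sigma> = T" "length \<sigma> = card T"
    by (auto simp: permutations_of_set_def distinct_card)
  have "set (drop u \<sigma>) \<inter> B = {}" for u
    using \<sigma>(2) assms(3) set_drop_subset[of u \<sigma>] by blast
  then have tail: "(\<Sum>c=u..<card T. exp (\<theta> (\<sigma> ! c))) + (\<Sum>j\<in>B. exp (\<theta> j))
      = (\<Sum>j\<in>set (drop u \<sigma>) \<union> B. exp (\<theta> j))" for u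
    using sum_nth_upt_eq_sum_set_drop[OF \<sigma>(1)] assms(1) \<sigma>(3) by (simp add: sum.union_disjoint)
  have "(\<Sum>j\<in>set (drop u \<sigma>) \<union> B. exp (\<theta> j)) > 0" for u
    using assms(1,2) by (intro sum_pos) auto
  with tail show "(\<Prod>u<card T. exp (\<theta> (\<sigma> ! u)) /
      ((\<Sum>c=u..<card T. exp (\<theta> (\<sigma> ! c))) + (\<Sum>j\<in>B. exp (\<theta> j)))) = exp (PL_loglik \<theta> \<sigma> B)"
    by (simp add: PL_loglik_def exp_sum exp_diff \<sigma>(3))
qed

definition choice_mass :: "('a \<Rightarrow> real) \<Rightarrow> 'a list \<Rightarrow> 'a set \<Rightarrow> 'a \<Rightarrow> real" where
  "choice_mass \<theta> \<sigma> B i = (\<Sum>u<length \<sigma>. luce_prob \<theta> (set (drop u \<sigma>) \<union> B) i)"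

lemma DERIV_PL_loglik:
  assumes "finite B"
  shows "((\<lambda>t. PL_loglik (\<theta>(i := t)) \<sigma> B) has_real_derivative
           (\<Sum>u<length \<sigma>. of_bool (\<sigma> ! u = i)) - choice_mass \<theta> \<sigma> B i) (at (\<theta> i))"
  unfolding PL_loglik_def choice_mass_def sum_subtractf[symmetric]
  using assms by (intro DERIV_sum DERIV_diff DERIV_fun_upd_apply DERIV_ln_sum_exp_coordinate) simp

lemma choice_mass_nonneg: "0 \<le> choice_mass \<theta> \<sigma> B i"
  unfolding choice_mass_def by (intro sum_nonneg luce_prob_nonneg)

lemma choice_mass_le:
  assumes "finite B" "B \<noteq> {}" "\<And>j. j \<in> set \<sigma> \<union> B \<Longrightarrow> \<bar>\<theta> j\<bar> \<le> b"
  shows "choice_mass \<theta> \<sigma> B i \<le> length \<sigma> * (exp (2 * b) / card B)"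
proof -
  have "luce_prob \<theta> (set (drop u \<sigma>) \<union> B) i \<le> exp (2 * b) / card B" for u
    using assms set_drop_subset[of u \<sigma>] by (intro luce_prob_le) auto
  then have "choice_mass \<theta> \<sigma> B i \<le> (\<Sum>u<length \<sigma>. exp (2 * b) / card B)"
    unfolding choice_mass_def by (intro sum_mono)
  then show ?thesis by simp
qed

lemma sum_choice_mass:
  assumes "finite C" "set \<sigma> \<union> B \<subseteq> C" "B \<noteq> {}"
  shows "(\<Sum>i\<in>C. choice_mass \<theta> \<sigma> B i) = length \<sigma>"
proof -
  have "(\<Sum>i\<in>C. luce_prob \<theta> (set (drop u \<sigma>) \<union> B) i) = 1" for u
    using assms set_drop_subset[of u \<sigma>] by (intro sum_luce_prob) auto
  then show ?thesis
    unfolding choice_mass_def by (subst sum.swap) simp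
qed

lemma choice_mass_eq_0:
  assumes "i \<notin> set \<sigma> \<union> B"
  shows "choice_mass \<theta> \<sigma> B i = 0"
proof -
  have "i \<notin> set (drop u \<sigma>) \<union> B" for u
    using assms set_drop_subset[of u \<sigma>] by blast
  then show ?thesis
    unfolding choice_mass_def luce_prob_def by simp
qed

text \<open>The weights exp (PL_loglik \<theta> \<sigma> B) / PL_prob \<theta> T B form the conditional law of the
  ranking of T given the event, so this is the expected choice mass of i given the event.\<close>
definition PL_choice_mass :: "('a \<Rightarrow> real) \<Rightarrow> 'a set \<Rightarrow> 'a set \<Rightarrow> 'a \<Rightarrow> real" where
  "PL_choice_mass \<theta> T B i =
     (\<Sum>\<sigma>\<in>permutations_of_set T. exp (PL_loglik \<theta> \<sigma> B) * choice_mass \<theta> \<sigma> B i)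
       / (\<Sum>\<sigma>\<in>permutations_of_set T. exp (PL_loglik \<theta> \<sigma> B))"

lemma sum_exp_PL_loglik_pos:
  assumes "finite T"
  shows "(\<Sum>\<sigma>\<in>permutations_of_set T. exp (PL_loglik \<theta> \<sigma> B)) > 0"
  using assms by (intro sum_pos) auto

lemma DERIV_ln_PL_prob:
  assumes "finite T" "finite B" "B \<noteq> {}" "T \<inter> B = {}"
  shows "((\<lambda>t. ln (PL_prob (\<theta>(i := t)) T B)) has_real_derivative
           of_bool (i \<in> T) - PL_choice_mass \<theta> T B i) (at (\<theta> i))"
proof -
  let ?S = "permutations_of_set T"
  let ?e = "\<lambda>\<sigma>. exp (PL_loglik \<theta> \<sigma> B)"
  have "((\<lambda>t. PL_loglik (\<theta>(i := t)) \<sigma> B) has_real_derivative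
          of_bool (i \<in> T) - choice_mass \<theta> \<sigma> B i) (at (\<theta> i))" if "\<sigma> \<in> ?S" for \<sigma>
  proof -
    have "(\<Sum>u<length \<sigma>. of_bool (\<sigma> ! u = i)) = (of_bool (i \<in> T) :: real)"
      using that sum_of_bool_nth_distinct[of \<sigma> i] by (simp add: permutations_of_set_def)
    with DERIV_PL_loglik[OF assms(2), where \<theta>=\<theta> and i=i and \<sigma>=\<sigma>] show ?thesis
      by simp
  qed
  from DERIV_ln_sum_exp[OF finite_permutations_of_set this]
  have "((\<lambda>t. ln (\<Sum>\<sigma>\<in>?S. exp (PL_loglik (\<theta>(i := t)) \<sigma> B))) has_real_derivative
          (\<Sum>\<sigma>\<in>?S. ?e \<sigma> * (of_bool (i \<in> T) - choice_mass \<theta> \<sigma> B i)) / (\<Sum>\<sigma>\<in>?S. ?e \<sigma>)) (at (\<theta> i))"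
    by (simp only: fun_upd_triv)
  moreover have "(\<Sum>\<sigma>\<in>?S. ?e \<sigma> * (of_bool (i \<in> T) - choice_mass \<theta> \<sigma> B i)) / (\<Sum>\<sigma>\<in>?S. ?e \<sigma>)
      = of_bool (i \<in> T) - PL_choice_mass \<theta> T B i"
    using sum_exp_PL_loglik_pos[OF assms(1), of \<theta> B]
    by (simp add: PL_choice_mass_def right_diff_distrib sum_subtractf diff_divide_distrib
        sum_distrib_right[symmetric])
  ultimately show ?thesis
    using PL_prob_eq_sum_exp_PL_loglik[OF assms(2-4)] by simp
qed

lemma PL_choice_mass_nonneg: "0 \<le> PL_choice_mass \<theta> T B i"
  unfolding PL_choice_mass_def
  by (intro divide_nonneg_nonneg sum_nonneg mult_nonneg_nonneg choice_mass_nonneg) auto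

lemma PL_choice_mass_le:
  assumes "finite B" "B \<noteq> {}" "\<And>j. j \<in> T \<union> B \<Longrightarrow> \<bar>\<theta> j\<bar> \<le> b"
  shows "PL_choice_mass \<theta> T B i \<le> card T * (exp (2 * b) / card B)"
  unfolding PL_choice_mass_def
proof (rule weighted_mean_le)
  fix \<sigma> assume "\<sigma> \<in> permutations_of_set T"
  then have "set \<sigma> = T" "length \<sigma> = card T"
    by (auto simp: permutations_of_set_def distinct_card)
  then show "choice_mass \<theta> \<sigma> B i \<le> card T * (exp (2 * b) / card B)"
    using choice_mass_le[OF assms(1,2)] assms(3) by metis
qed auto

lemma sum_PL_choice_mass:
  assumes "finite T" "finite B" "B \<noteq> {}"
  shows "(\<Sum>i\<in>T \<union> B. PL_choice_mass \<theta> T B i) = card T"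
proof -
  let ?S = "permutations_of_set T"
  let ?e = "\<lambda>\<sigma>. exp (PL_loglik \<theta> \<sigma> B)"
  have "(\<Sum>i\<in>T \<union> B. choice_mass \<theta> \<sigma> B i) = card T" if "\<sigma> \<in> ?S" for \<sigma>
    using that assms sum_choice_mass[of "T \<union> B" \<sigma> B \<theta>]
    by (auto simp: permutations_of_set_def distinct_card)
  then have "(\<Sum>i\<in>T \<union> B. \<Sum>\<sigma>\<in>?S. ?e \<sigma> * choice_mass \<theta> \<sigma> B i) = (\<Sum>\<sigma>\<in>?S. ?e \<sigma> * card T)"
    by (subst sum.swap) (simp add: sum_distrib_left[symmetric])
  also have "\<dots> = card T * (\<Sum>\<sigma>\<in>?S. ?e \<sigma>)"
    by (simp add: sum_distrib_left mult.commute)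
  finally show ?thesis
    using sum_exp_PL_loglik_pos[OF assms(1), of \<theta> B]
    by (simp add: PL_choice_mass_def sum_divide_distrib[symmetric])
qed

lemma PL_choice_mass_eq_0:
  assumes "i \<notin> T \<union> B"
  shows "PL_choice_mass \<theta> T B i = 0"
  using assms choice_mass_eq_0[of i _ B \<theta>]
  by (simp add: PL_choice_mass_def permutations_of_set_def)

theorem mainTheorem9:
  fixes d :: nat and T B :: "nat set" and \<theta> :: "nat \<Rightarrow> real" and b :: real
  assumes "T \<subseteq> {..<d}" and "B \<subseteq> {..<d}"
    and "T \<noteq> {}" and "B \<noteq> {}" and "T \<inter> B = {}"
    and "\<forall>i<d. \<bar>\<theta> i\<bar> \<le> b"
  shows "\<exists>D :: nat \<Rightarrow> real.
           (\<forall>i<d. ((\<lambda>t. ln (PL_prob (\<theta>(i := t)) T B)) has_real_derivative D i) (at (\<theta> i)))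
         \<and> (\<Sum>i\<in>T \<union> B. (D i)\<^sup>2)
              \<le> 2 * real (card T) * exp (2 * b)
                 * (real (card T + card B) / (real (card T + card B) - real (card T)))\<^sup>2
         \<and> (\<forall>i<d. i \<notin> T \<union> B \<longrightarrow> D i = 0)"
proof -
  have fin: "finite T" "finite B"
    using assms(1,2) finite_subset by auto
  have bnd: "\<And>j. j \<in> T \<union> B \<Longrightarrow> \<bar>\<theta> j\<bar> \<le> b"
    using assms(1,2,6) by auto
  have "0 \<le> b"
    using assms(4) bnd by (meson Un_iff abs_ge_zero ex_in_conv order_trans)
  have cB: "0 < real (card B)"
    using fin(2) assms(4) by (simp add: card_gt_0_iff)
  let ?X = "PL_choice_mass \<theta> T B"
  have "(\<Sum>i\<in>T \<union> B. (of_bool (i \<in> T) - ?X i)\<^sup>2)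
      \<le> card T + card T * (exp (2 * b) / card B) * sum ?X (T \<union> B)"
    using fin PL_choice_mass_nonneg PL_choice_mass_le[OF fin(2) assms(4) bnd]
    by (intro sum_square_of_bool_minus_le) auto
  also have "\<dots> \<le> 2 * real (card T) * exp (2 * b)
                 * (real (card T + card B) / (real (card T + card B) - real (card T)))\<^sup>2"
    using sum_PL_choice_mass[OF fin assms(4)] PL_gradient_bound_arith[OF _ cB] \<open>0 \<le> b\<close>
    by simp
  finally show ?thesis
    using DERIV_ln_PL_prob[OF fin assms(4,5)]
    by (intro exI[of _ "\<lambda>i. of_bool (i \<in> T) - ?X i"]) (auto simp: PL_choice_mass_eq_0)
qed

end
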